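(* Let $S>0$, $K\ge2$, let $N_1,\dots,N_K$ be positive integers, and for $q\in\{1,\dots,K-1\}$ let $t_q$ be the unique solution in $t>1$ of $$t^2\ln t-(t^2-1)+\frac{t\sum_{k=1}^{q}N_k+N_{q+1}}{S+\sum_{k=1}^{K}N_k}(t-1)=0.$$ Then $t_q<t_{root}$ for all $q=1,\dots,K-1$, where $t_{root}\approx 2.21846$ is the larger root of the equation $t^2\ln t-(t^2-1)=0$. *)

theory Defs
  imports Complex_Main
begin

definition g_base :: "real \<Rightarrow> real" where
  "g_base t = t\<^sup>2 * ln t - (t\<^sup>2 - 1)"

definition t_root :: real where
  "t_root = (GREATEST r. r > 0 \<and> g_base r = 0)"

definition t_q :: "real \<Rightarrow> (nat \<Rightarrow> nat) \<Rightarrow> nat \<Rightarrow> nat \<Rightarrow> real" where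
  "t_q S N K q = (THE t. t > 1 \<and>
      g_base t + (t * (\<Sum>k=1..q. real (N k)) + real (N (q+1)))
                 / (S + (\<Sum>k=1..K. real (N k))) * (t - 1) = 0)"

end

theory Submission
  imports Defs
begin

text \<open>
  The function \<open>g_base\<close> has derivative \<open>t (2 ln t - 1)\<close>, so it falls on \<open>[1, \<surd>e]\<close> and rises
  on \<open>[\<surd>e, \<infinity>)\<close>; as \<open>g_base 1 = 0\<close> and \<open>g_base e = 1\<close>, \<open>t_root\<close> is its only zero beyond
  \<open>\<surd>e\<close> and \<open>g_base\<close> is positive after it.  Writing the equation for \<open>t_q\<close> as
  \<open>g_base t + (a t + b)(t - 1) = 0\<close> with \<open>a \<ge> 0\<close>, \<open>b > 0\<close>, \<open>a + b < 1\<close>, the left side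
  vanishes at 1 with slope \<open>a + b - 1 < 0\<close> and is positive from \<open>t_root\<close> on, so it has a
  zero in \<open>(1, t_root)\<close>.  Its derivative is strictly increasing on \<open>[1, \<infinity>)\<close>, so by the mean
  value theorem applied twice it has no other zero beyond 1.
\<close>

lemma zero_unique_if_deriv_strict_mono:
  fixes f f' :: "real \<Rightarrow> real"
  assumes deriv: "\<And>x. a \<le> x \<Longrightarrow> (f has_real_derivative f' x) (at x)"
    and mono: "strict_mono_on {a..} f'"
    and "f a = 0"
    and "a < s" "a < t" "f s = 0" "f t = 0"
  shows "s = t"
proof -
  have deriv_zero: "\<exists>z. u < z \<and> z < v \<and> f' z = 0"
    if "a \<le> u" "u < v" "f u = 0" "f v = 0" for u v
  proof -
    have "\<And>x. u \<le> x \<Longrightarrow> x \<le> v \<Longrightarrow> (f has_real_derivative f' x) (at x)"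
      using deriv \<open>a \<le> u\<close> by auto
    then obtain z where "u < z" "z < v" "f v - f u = (v - u) * f' z"
      using MVT2[OF \<open>u < v\<close>] by blast
    with that show ?thesis by auto
  qed
  have no_two_zeros: False if zeros: "a < s" "s < t" "f s = 0" "f t = 0" for s t
  proof -
    obtain z1 where "a < z1" "z1 < s" "f' z1 = 0"
      using deriv_zero[of a s] zeros \<open>f a = 0\<close> by auto
    moreover obtain z2 where "s < z2" "f' z2 = 0"
      using deriv_zero[of s t] zeros by auto
    ultimately show False
      using strict_mono_onD[OF mono, of z1 z2] by auto
  qed
  show "s = t"
    using no_two_zeros[of s t] no_two_zeros[of t s] assms(4-7) by (cases s t rule: linorder_cases) auto
qed

lemma zero_between_if_deriv_neg:
  fixes f f' :: "real \<Rightarrow> real"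
  assumes deriv: "\<And>x. a \<le> x \<Longrightarrow> x \<le> b \<Longrightarrow> (f has_real_derivative f' x) (at x)"
    and "a < b" "f a = 0" "f' a < 0" "0 < f b"
  shows "\<exists>t. a < t \<and> t < b \<and> f t = 0"
proof -
  obtain d where "d > 0" and dec: "\<And>h. 0 < h \<Longrightarrow> h < d \<Longrightarrow> f (a + h) < f a"
    using DERIV_neg_dec_right[OF deriv[of a] \<open>f' a < 0\<close>] \<open>a < b\<close> by auto
  define h where "h = min (d / 2) ((b - a) / 2)"
  have "0 < h" "h < d" "h < b - a"
    using \<open>d > 0\<close> \<open>a < b\<close> by (auto simp: h_def min_def)
  define c where "c = a + h"
  have c: "a < c" "c < b" "f c < 0"
    using \<open>0 < h\<close> \<open>h < b - a\<close> dec[OF \<open>0 < h\<close> \<open>h < d\<close>] \<open>f a = 0\<close> by (auto simp: c_def)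
  have "\<exists>t. c \<le> t \<and> t \<le> b \<and> f t = 0"
    using c \<open>0 < f b\<close> by (intro IVT) (auto intro!: DERIV_isCont deriv)
  with c \<open>0 < f b\<close> show ?thesis
    by (metis less_eq_real_def less_le_trans less_irrefl)
qed

lemma g_base_has_derivative:
  "0 < t \<Longrightarrow> (g_base has_real_derivative t * (2 * ln t - 1)) (at t)"
proof -
  assume "0 < t"
  then have "((\<lambda>t. t\<^sup>2 * ln t - (t\<^sup>2 - 1)) has_real_derivative t * (2 * ln t - 1)) (at t)"
    by (auto intro!: derivative_eq_intros simp: field_simps power2_eq_square)
  then show ?thesis
    by (simp add: g_base_def[abs_def])
qed

lemma continuous_on_g_base: "0 < a \<Longrightarrow> continuous_on {a..b} g_base"
  by (auto intro!: continuous_at_imp_continuous_on DERIV_isCont[OF g_base_has_derivative])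

lemma g_base_one [simp]: "g_base 1 = 0"
  by (simp add: g_base_def)

lemma g_base_exp_one [simp]: "g_base (exp 1) = 1"
  by (simp add: g_base_def)

lemma g_base_strict_antimono:
  assumes "1 \<le> s" "s < t" "t \<le> exp (1/2)"
  shows "g_base t < g_base s"
proof (rule DERIV_neg_imp_decreasing_open[OF \<open>s < t\<close> _ continuous_on_g_base])
  fix x assume "s < x" "x < t"
  with assms have "0 < x" by linarith
  moreover from \<open>x < t\<close> assms(3) have "ln x < 1/2"
    using ln_less_cancel_iff[OF \<open>0 < x\<close>, of "exp (1/2)"] by simp
  ultimately show "\<exists>y. (g_base has_real_derivative y) (at x) \<and> y < 0"
    by (intro exI[of _ "x * (2 * ln x - 1)"] conjI g_base_has_derivative) (auto intro: mult_pos_neg)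
qed (use assms in auto)

lemma g_base_strict_mono:
  assumes "exp (1/2) \<le> s" "s < t"
  shows "g_base s < g_base t"
proof (rule DERIV_pos_imp_increasing_open[OF \<open>s < t\<close> _ continuous_on_g_base])
  fix x assume "s < x" "x < t"
  with assms exp_gt_zero[of "1/2"] have "0 < x" by linarith
  moreover from \<open>s < x\<close> assms(1) have "1/2 < ln x"
    using ln_less_cancel_iff[OF _ \<open>0 < x\<close>, of "exp (1/2)"] by simp
  ultimately show "\<exists>y. (g_base has_real_derivative y) (at x) \<and> 0 < y"
    by (intro exI[of _ "x * (2 * ln x - 1)"] conjI g_base_has_derivative) auto
qed (use assms order.strict_trans2[OF exp_gt_zero] in auto)

lemma g_base_zero_gt_sqrt_e: "\<exists>r. exp (1/2) < r \<and> g_base r = 0"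
proof -
  have "g_base (exp (1/2)) < 0"
    using g_base_strict_antimono[of 1 "exp (1/2)"] by simp
  moreover have "exp (1/2) \<le> exp (1::real)" by simp
  ultimately obtain r where "exp (1/2) \<le> r" "g_base r = 0"
    using IVT[of g_base "exp (1/2)" 0 "exp 1"]
    by (force intro: DERIV_isCont g_base_has_derivative order.strict_trans2[OF exp_gt_zero])
  with \<open>g_base (exp (1/2)) < 0\<close> show ?thesis
    by (metis less_eq_real_def less_irrefl)
qed

lemma t_root_zero: "exp (1/2) < t_root" "g_base t_root = 0"
proof -
  obtain r where r: "exp (1/2) < r" "g_base r = 0"
    using g_base_zero_gt_sqrt_e by blast
  have "t_root = r"
    unfolding t_root_def
  proof (rule Greatest_equality)
    show "0 < r \<and> g_base r = 0"
      using r order.strict_trans[OF exp_gt_zero] by blast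
    show "y \<le> r" if "0 < y \<and> g_base y = 0" for y
      using that r g_base_strict_mono[of r y] by force
  qed
  with r show "exp (1/2) < t_root" "g_base t_root = 0" by auto
qed

lemma g_base_nonneg_ge_t_root: "t_root \<le> t \<Longrightarrow> 0 \<le> g_base t"
  using t_root_zero g_base_strict_mono[of t_root t] by (cases "t = t_root") auto

lemma one_lt_t_root: "1 < t_root"
  using t_root_zero(1) one_less_exp_iff[of "1/2::real"] by linarith

definition g_perturbed :: "real \<Rightarrow> real \<Rightarrow> real \<Rightarrow> real" where
  "g_perturbed a b t = g_base t + (a * t + b) * (t - 1)"

lemma g_perturbed_has_derivative:
  "0 < t \<Longrightarrow> (g_perturbed a b has_real_derivative t * (2 * ln t - 1) + 2 * a * t - a + b) (at t)"
  unfolding g_perturbed_def[abs_def]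
  by (auto intro!: derivative_eq_intros g_base_has_derivative simp: algebra_simps)

lemma g_perturbed_deriv_strict_mono:
  fixes a b :: real
  assumes "0 \<le> a"
  shows "strict_mono_on {1..} (\<lambda>t. t * (2 * ln t - 1) + 2 * a * t - a + b)"
proof (rule strict_mono_onI)
  have deriv: "((\<lambda>t. t * (2 * ln t - 1)) has_real_derivative 2 * ln x + 1) (at x)"
    if "0 < x" for x :: real
    using that by (auto intro!: derivative_eq_intros simp: field_simps)
  fix s t :: real assume "s \<in> {1..}" "t \<in> {1..}" "s < t"
  then have "s * (2 * ln s - 1) < t * (2 * ln t - 1)"
  proof (intro DERIV_pos_imp_increasing_open[OF \<open>s < t\<close>])
    fix x assume "s < x" "x < t"
    with \<open>s \<in> {1..}\<close> have "1 < x" by auto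
    then have "0 < 2 * ln x + 1"
      using ln_gt_zero[of x] by linarith
    with \<open>1 < x\<close> show "\<exists>y. ((\<lambda>t. t * (2 * ln t - 1)) has_real_derivative y) (at x) \<and> 0 < y"
      by (intro exI[of _ "2 * ln x + 1"] conjI deriv) auto
  qed (auto intro!: continuous_intros)
  moreover have "a * s \<le> a * t"
    using \<open>s < t\<close> assms by (simp add: mult_left_mono)
  ultimately show "s * (2 * ln s - 1) + 2 * a * s - a + b < t * (2 * ln t - 1) + 2 * a * t - a + b"
    by linarith
qed

lemma g_perturbed_pos_ge_t_root:
  assumes "0 \<le> a" "0 < b" "t_root \<le> t"
  shows "0 < g_perturbed a b t"
proof -
  have "0 < (a * t + b) * (t - 1)"
    using assms one_lt_t_root by (intro mult_pos_pos add_nonneg_pos) auto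
  with g_base_nonneg_ge_t_root[OF \<open>t_root \<le> t\<close>] show ?thesis
    by (simp add: g_perturbed_def)
qed

lemma g_perturbed_zero_lt_t_root:
  assumes "0 \<le> a" "0 < b" "a + b < 1"
  shows "(THE t. 1 < t \<and> g_perturbed a b t = 0) < t_root"
proof -
  let ?f' = "\<lambda>t. t * (2 * ln t - 1) + 2 * a * t - a + b"
  have deriv: "(g_perturbed a b has_real_derivative ?f' x) (at x)" if "1 \<le> x" for x
    using that by (intro g_perturbed_has_derivative) auto
  have "g_perturbed a b 1 = 0"
    by (simp add: g_perturbed_def)
  obtain t where t: "1 < t" "t < t_root" "g_perturbed a b t = 0"
    using zero_between_if_deriv_neg[OF deriv one_lt_t_root \<open>g_perturbed a b 1 = 0\<close>]
      g_perturbed_pos_ge_t_root[OF \<open>0 \<le> a\<close> \<open>0 < b\<close> order_refl] \<open>a + b < 1\<close>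
    by auto
  have "(THE t. 1 < t \<and> g_perturbed a b t = 0) = t"
    using t zero_unique_if_deriv_strict_mono[OF deriv
        g_perturbed_deriv_strict_mono[OF \<open>0 \<le> a\<close>] \<open>g_perturbed a b 1 = 0\<close>]
    by (intro the_equality) auto
  with t show ?thesis by simp
qed

theorem corollary1:
  fixes S :: real and K :: nat and N :: "nat \<Rightarrow> nat"
  assumes "S > 0" and "K \<ge> 2" and "\<And>k. k \<in> {1..K} \<Longrightarrow> N k > 0"
  shows "\<forall>q \<in> {1..K-1}. t_q S N K q < t_root"
proof
  fix q assume q: "q \<in> {1..K-1}"
  define A where "A = (\<Sum>k=1..q. real (N k))"
  define B where "B = real (N (q+1))"
  define D where "D = S + (\<Sum>k=1..K. real (N k))"
  have "0 \<le> A" "0 < B"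
    using assms(3)[of "q+1"] q by (auto simp: A_def B_def intro: sum_nonneg)
  have "A + B = (\<Sum>k=1..q+1. real (N k))"
    by (simp add: A_def B_def)
  also have "\<dots> \<le> (\<Sum>k=1..K. real (N k))"
    using q by (intro sum_mono2) auto
  finally have "A + B < D"
    using \<open>S > 0\<close> by (simp add: D_def)
  then have "A / D + B / D < 1" "0 < D"
    using \<open>0 \<le> A\<close> \<open>0 < B\<close> by (auto simp: add_divide_distrib[symmetric])
  have "g_base t + (t * A + B) / D * (t - 1) = g_perturbed (A / D) (B / D) t" for t
    by (simp add: g_perturbed_def add_divide_distrib)
  then have "t_q S N K q = (THE t. 1 < t \<and> g_perturbed (A / D) (B / D) t = 0)"
    unfolding t_q_def A_def [symmetric] B_def [symmetric] D_def [symmetric] by presburger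
  also have "\<dots> < t_root"
    using \<open>0 \<le> A\<close> \<open>0 < B\<close> \<open>0 < D\<close> \<open>A / D + B / D < 1\<close> by (intro g_perturbed_zero_lt_t_root) auto
  finally show "t_q S N K q < t_root" .
qed

end
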